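(* Let $e\ge2$ and let $\lambda$ be a nonempty $e$-regular partition with inner corners $i_1<\dots<i_{r+1}$, and let $\omega^+_\lambda$ be its outer flattening. Then: (1) $0\le\omega^+_\lambda(s)-\omega_\lambda(s)\le e$ for all $s\in\mathbb R$; (2) $\omega^+_\lambda(s)=|s|$ for all $s\notin(i_1-1,i_{r+1})$; (3) the set $G^+_\lambda=\mathrm{gr}(\omega^+_\lambda)$ satisfies $\mathrm{sh}_e(G^+_\lambda)=G^+_\lambda$.
   Context: A partition $\lambda=(\lambda_1\ge\dots\ge\lambda_h>0)$ is $e$-regular if $\lambda_i>\lambda_{i+e-1}$ for all $i\le h-e+1$. $Y(\lambda)=\{(a,b):1\le a\le h,1\le b\le\lambda_a\}$; node $(a,b)$ corresponds to the closed square with vertices $(a-b,a+b),(a-b\pm1,a+b-1),(a-b,a+b-2)$, and $\omega_\lambda(x)=\max(|x|,\sup\{y:(x,y)\text{ lies in one of these squares}\})$. An integer $c$ is an outer (resp. inner) corner if $\omega_\lambda'=1$ on $(c-1,c)$ and $-1$ on $(c,c+1)$ (resp. $-1$ then $1$); the outer corners are $c_1<\dots<c_r$ and inner corners $i_1<\dots<i_{r+1}$. Let $\alpha_e=1-2e^{-1}$. Outer flattening: $\omega^{(0)}=\omega_\lambda$; for $k=1,\dots,r$, let $h_k<c_k$ be the abscissa of the first point where the line of slope $\alpha_e$ through $(c_k,\omega_\lambda(c_k))$, followed from $c_k$ in the negative direction, meets the graph of $\omega^{(k-1)}$; $\omega^{(k)}=\omega^{(k-1)}$ on $(-\infty,h_k]\cup[c_k,\infty)$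 and $\omega^{(k)}(s)=\omega_\lambda(c_k)+\alpha_e(s-c_k)$ on $[h_k,c_k]$. Set $\omega^+_\lambda=\omega^{(r)}$. For continuous $g\ge|\cdot|$ with $g(x)=|x|$ for $|x|$ large and $g\ne|\cdot|$: $a_g=\inf\{x:g(x)\ne|x|\}$, $b_g=\sup\{x:g(x)\ne|x|\}$, $\mathrm{gr}(g)=\{(x,y)\in[a_g,b_g]\times\mathbb R_{\ge0}:|x|\le y\le g(x)\}$. Shaking: $D$ the line $y=-x$, $v$ the unit vector positively collinear to $(1,\alpha_e)$; for compact $K$, $\mathrm{sh}_e(K)=\bigcup_{p\in D}K^p$ with $K^p=\emptyset$ if $K\cap(p+\mathbb Rv)=\emptyset$ and otherwise the segment from $p$ to $p+|K\cap(p+\mathbb Rv)|\,v$ ($|\cdot|$ one-dimensional Lebesgue measure). *)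

theory Defs
  imports "HOL-Analysis.Analysis"
begin

text \<open>A partition is a list of positive naturals, weakly decreasing;
  lam ! (i-1) is the part lambda_i (0-based indexing in the list).\<close>
definition is_partition :: "nat list \<Rightarrow> bool" where
  "is_partition lam \<longleftrightarrow> sorted_wrt (\<ge>) lam \<and> (\<forall>x\<in>set lam. 0 < x)"

definition e_regular :: "nat \<Rightarrow> nat list \<Rightarrow> bool" where
  "e_regular e lam \<longleftrightarrow> (\<forall>i. i + e - 1 < length lam \<longrightarrow> lam ! i > lam ! (i + e - 1))"

definition young :: "nat list \<Rightarrow> (nat \<times> nat) set" where
  "young lam = {(a, b). 1 \<le> a \<and> a \<le> length lam \<and> 1 \<le> b \<and> b \<le> lam ! (a - 1)}"

definition node_square :: "nat \<Rightarrow> nat \<Rightarrow> (real \<times> real) set" where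
  "node_square a b = convex hull
     {(real a - real b, real a + real b),
      (real a - real b + 1, real a + real b - 1),
      (real a - real b - 1, real a + real b - 1),
      (real a - real b, real a + real b - 2)}"

definition omega :: "nat list \<Rightarrow> real \<Rightarrow> real" where
  "omega lam x = (let S = {y. \<exists>(a, b)\<in>young lam. (x, y) \<in> node_square a b}
                  in if S = {} then \<bar>x\<bar> else max \<bar>x\<bar> (Sup S))"

definition outer_corners :: "nat list \<Rightarrow> int set" where
  "outer_corners lam = {c. (\<forall>s\<in>{real_of_int c - 1<..<real_of_int c}. (omega lam has_real_derivative 1) (at s))
                         \<and> (\<forall>s\<in>{real_of_int c<..<real_of_int c + 1}. (omega lam has_real_derivative -1) (at s))}"

definition inner_corners :: "nat list \<Rightarrow> int set" where
  "inner_corners lam = {c. (\<forall>s\<in>{real_of_int c - 1<..<real_of_int c}. (omega lam has_real_derivative -1) (at s))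
                         \<and> (\<forall>s\<in>{real_of_int c<..<real_of_int c + 1}. (omega lam has_real_derivative 1) (at s))}"

definition alpha :: "nat \<Rightarrow> real" where
  "alpha e = 1 - 2 / real e"

text \<open>h_k: abscissa of the first point (going left from c_k) where the line of slope alpha_e
  through (c_k, omega_lambda(c_k)) meets the graph of the current function w.\<close>
definition flat_point :: "nat \<Rightarrow> nat list \<Rightarrow> int \<Rightarrow> (real \<Rightarrow> real) \<Rightarrow> real" where
  "flat_point e lam c w = Sup {s. s < real_of_int c \<and>
       w s = omega lam (real_of_int c) + alpha e * (s - real_of_int c)}"

definition flat_step :: "nat \<Rightarrow> nat list \<Rightarrow> int \<Rightarrow> (real \<Rightarrow> real) \<Rightarrow> (real \<Rightarrow> real)" where
  "flat_step e lam c w = (\<lambda>s. if flat_point e lam c w \<le> s \<and> s \<le> real_of_int c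
        then omega lam (real_of_int c) + alpha e * (s - real_of_int c) else w s)"

definition omega_plus :: "nat \<Rightarrow> nat list \<Rightarrow> real \<Rightarrow> real" where
  "omega_plus e lam = fold (flat_step e lam) (sorted_list_of_set (outer_corners lam)) (omega lam)"

definition gr :: "(real \<Rightarrow> real) \<Rightarrow> (real \<times> real) set" where
  "gr g = (let a = Inf {x. g x \<noteq> \<bar>x\<bar>}; b = Sup {x. g x \<noteq> \<bar>x\<bar>}
           in {(x, y). a \<le> x \<and> x \<le> b \<and> 0 \<le> y \<and> \<bar>x\<bar> \<le> y \<and> y \<le> g x})"

text \<open>The one-dimensional Lebesgue measure of K \<inter> (p + R v) is the Lebesgue measure of the
  parameter set, v being a unit vector.\<close>
definition shake_dir :: "nat \<Rightarrow> real \<times> real" where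
  "shake_dir e = (1 / norm (1::real, alpha e)) *\<^sub>R (1, alpha e)"

definition shake :: "nat \<Rightarrow> (real \<times> real) set \<Rightarrow> (real \<times> real) set" where
  "shake e K = (\<Union>p\<in>{q. snd q = - fst q}.
     if K \<inter> {p + t *\<^sub>R shake_dir e | t. True} = {} then {}
     else closed_segment p (p + measure lborel {t. p + t *\<^sub>R shake_dir e \<in> K} *\<^sub>R shake_dir e))"

end

theory Submission
  imports Defs
begin

text \<open>The profile \<open>\<omega>\<^sub>\<lambda>\<close> is affine with slope \<open>\<plusminus>1\<close> on every \<open>[n, n + 1]\<close> and equals \<open>|x|\<close>
  outside \<open>[i\<^sub>1, i\<^sub>r\<^sub>+\<^sub>1]\<close>. Shearing by \<open>\<alpha>\<^sub>e\<close>, i.e. passing to \<open>S(x) = \<omega>\<^sub>\<lambda>(x) - \<alpha>\<^sub>e x\<close>, makes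
  the flattening lines horizontal, and the flattening up to an outer corner \<open>c\<close> becomes
  \<open>\<alpha>\<^sub>e x + max\<^bsub>[x, c]\<^esub> S\<close> to the left of \<open>c\<close>. Between consecutive outer corners the profile
  descends at least one step and, by \<open>e\<close>-regularity, climbs fewer than \<open>e\<close> steps; so \<open>S\<close> never rises by
  more than \<open>(1 - \<alpha>\<^sub>e)(e - 1) = 1 + \<alpha>\<^sub>e \<le> e\<close>, which bounds \<open>\<omega>\<^sup>+\<^sub>\<lambda> - \<omega>\<^sub>\<lambda>\<close>, and to the left of
  \<open>i\<^sub>1\<close> the running maximum of \<open>S\<close> is \<open>S\<close> itself. Finally \<open>\<omega>\<^sup>+\<^sub>\<lambda> - \<alpha>\<^sub>e x\<close> is nonincreasing up to
  \<open>i\<^sub>r\<^sub>+\<^sub>1\<close>, so every line of direction \<open>v\<close> through \<open>D\<close> meets \<open>gr(\<omega>\<^sup>+\<^sub>\<lambda>)\<close> in a segment starting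
  on \<open>D\<close>, and shaking along \<open>v\<close> does not move it.\<close>

section \<open>The profile of a partition\<close>

definition row_len :: "nat list \<Rightarrow> nat \<Rightarrow> nat" where
  "row_len lam a = (if 1 \<le> a \<and> a \<le> length lam then lam ! (a - 1) else 0)"

lemma young_iff_row_len: "(a, b) \<in> young lam \<longleftrightarrow> 1 \<le> a \<and> 1 \<le> b \<and> b \<le> row_len lam a"
  by (auto simp: young_def row_len_def)

lemma finite_young: "finite (young lam)"
proof (rule finite_subset)
  show "young lam \<subseteq> {..length lam} \<times> {..sum_list lam}"
  proof
    fix z assume "z \<in> young lam"
    then obtain a b where z: "z = (a, b)" "1 \<le> a" "a \<le> length lam" "b \<le> lam ! (a - 1)"
      by (auto simp: young_def)
    have "lam ! (a - 1) \<le> sum_list lam"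
      using z by (intro member_le_sum_list nth_mem) auto
    with z show "z \<in> {..length lam} \<times> {..sum_list lam}" by auto
  qed
qed simp

lemma row_len_antimono:
  assumes "is_partition lam" "1 \<le> a" "a \<le> a'"
  shows "row_len lam a' \<le> row_len lam a"
proof (cases "a < a' \<and> a' \<le> length lam")
  case True
  have "sorted_wrt (\<ge>) lam" using assms(1) by (simp add: is_partition_def)
  then have "lam ! (a' - 1) \<le> lam ! (a - 1)"
    using True assms(2) sorted_wrt_nth_less[of "(\<ge>)" lam "a - 1" "a' - 1"] by auto
  with True assms(2) show ?thesis by (simp add: row_len_def)
qed (use assms in \<open>auto simp: row_len_def\<close>)

lemma row_len_pos:
  assumes "is_partition lam" "1 \<le> a" "a \<le> length lam"
  shows "1 \<le> row_len lam a"
proof -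
  have "lam ! (a - 1) \<in> set lam" using assms by (intro nth_mem) auto
  with assms show ?thesis by (auto simp: is_partition_def row_len_def Suc_le_eq)
qed

lemma young_downward_closed:
  assumes "is_partition lam" "(a, b) \<in> young lam" "1 \<le> a'" "a' \<le> a" "1 \<le> b'" "b' \<le> b"
  shows "(a', b') \<in> young lam"
  using assms row_len_antimono[OF assms(1), of a' a] by (auto simp: young_iff_row_len)

text \<open>On \<open>[n, n + 1]\<close> the graph of \<open>\<omega>\<^sub>\<lambda>\<close> is made of the upper edges of the squares of the
  outermost nodes on the diagonals \<open>a - b = n\<close> and \<open>a - b = n + 1\<close>; these two functions locate
  them, with the value \<open>0\<close> for an empty diagonal.\<close>

definition diag_row :: "nat list \<Rightarrow> int \<Rightarrow> nat" where
  "diag_row lam n = Max ({0} \<union> {a. \<exists>b. (a, b) \<in> young lam \<and> int a - int b = n})"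

definition diag_col :: "nat list \<Rightarrow> int \<Rightarrow> nat" where
  "diag_col lam n = Max ({0} \<union> {b. \<exists>a. (a, b) \<in> young lam \<and> int a - int b = n + 1})"

lemma finite_diag_rows: "finite {a. \<exists>b. (a, b) \<in> young lam \<and> int a - int b = n}"
  by (rule finite_subset[OF _ finite_imageI[OF finite_young, of fst]]) force

lemma finite_diag_cols: "finite {b. \<exists>a. (a, b) \<in> young lam \<and> int a - int b = n + 1}"
  by (rule finite_subset[OF _ finite_imageI[OF finite_young, of snd]]) force

lemma diag_row_ge: "(a, b) \<in> young lam \<Longrightarrow> int a - int b = n \<Longrightarrow> a \<le> diag_row lam n"
  unfolding diag_row_def by (rule Max_ge) (use finite_diag_rows in auto)

lemma diag_col_ge: "(a, b) \<in> young lam \<Longrightarrow> int a - int b = n + 1 \<Longrightarrow> b \<le> diag_col lam n"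
  unfolding diag_col_def by (rule Max_ge) (use finite_diag_cols in auto)

lemma diag_row_cases:
  "diag_row lam n = 0 \<or> (\<exists>b. (diag_row lam n, b) \<in> young lam \<and> int (diag_row lam n) - int b = n)"
proof -
  have "diag_row lam n \<in> {0} \<union> {a. \<exists>b. (a, b) \<in> young lam \<and> int a - int b = n}"
    unfolding diag_row_def by (rule Max_in) (use finite_diag_rows in auto)
  then show ?thesis by auto
qed

lemma diag_col_cases:
  "diag_col lam n = 0 \<or> (\<exists>a. (a, diag_col lam n) \<in> young lam \<and> int a - int (diag_col lam n) = n + 1)"
proof -
  have "diag_col lam n \<in> {0} \<union> {b. \<exists>a. (a, b) \<in> young lam \<and> int a - int b = n + 1}"
    unfolding diag_col_def by (rule Max_in) (use finite_diag_cols in auto)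
  then show ?thesis by auto
qed

lemma node_square_bound:
  assumes "(x, y) \<in> node_square a b"
  shows "y + x \<le> 2 * real a" "y - x \<le> 2 * real b"
proof -
  have "node_square a b \<subseteq> {z. inner (1, 1) z \<le> 2 * real a} \<inter> {z. inner (-1, 1) z \<le> 2 * real b}"
    unfolding node_square_def
    by (intro hull_minimal convex_Int convex_halfspace_le) (auto simp: inner_Pair)
  with assms show "y + x \<le> 2 * real a" "y - x \<le> 2 * real b"
    by (auto simp: inner_Pair)
qed

lemma upper_right_edge_in_node_square:
  assumes "real a - real b \<le> x" "x \<le> real a - real b + 1"
  shows "(x, 2 * real a - x) \<in> node_square a b"
proof -
  let ?P = "(real a - real b, real a + real b)" and ?Q = "(real a - real b + 1, real a + real b - 1)"
  have "closed_segment ?P ?Q \<subseteq> node_square a b"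
    unfolding node_square_def by (intro closed_segment_subset hull_inc convex_convex_hull) auto
  moreover have "(x, 2 * real a - x) \<in> closed_segment ?P ?Q"
    using assms unfolding in_segment
    by (intro exI[of _ "x - (real a - real b)"]) (auto simp: algebra_simps)
  ultimately show ?thesis by blast
qed

lemma upper_left_edge_in_node_square:
  assumes "real a - real b - 1 \<le> x" "x \<le> real a - real b"
  shows "(x, 2 * real b + x) \<in> node_square a b"
proof -
  let ?P = "(real a - real b - 1, real a + real b - 1)" and ?Q = "(real a - real b, real a + real b)"
  have "closed_segment ?P ?Q \<subseteq> node_square a b"
    unfolding node_square_def by (intro closed_segment_subset hull_inc convex_convex_hull) auto
  moreover have "(x, 2 * real b + x) \<in> closed_segment ?P ?Q"
    using assms unfolding in_segment
    by (intro exI[of _ "x - (real a - real b - 1)"]) (auto simp: algebra_simps)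
  ultimately show ?thesis by blast
qed

text \<open>A node beyond the diagonal \<open>n + 1\<close> can be slid up its column onto that diagonal, and a node
  before the diagonal \<open>n\<close> along its row onto it; the only obstruction is leaving the diagram,
  and then the node lies below the graph of \<open>|x|\<close> over \<open>[n, n + 1]\<close>.\<close>

lemma node_height_le:
  assumes part: "is_partition lam" and ab: "(a, b) \<in> young lam" "(x, y) \<in> node_square a b"
    and x: "real_of_int n \<le> x" "x \<le> real_of_int n + 1"
  shows "y \<le> max \<bar>x\<bar> (max (2 * real (diag_row lam n) - x) (2 * real (diag_col lam n) + x))"
proof -
  have a1: "1 \<le> a" and b1: "1 \<le> b" using ab(1) by (auto simp: young_def)
  note edge = node_square_bound[OF ab(2)]
  show ?thesis
  proof (cases "n + 1 \<le> int a - int b")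
    case True
    show ?thesis
    proof (cases "1 \<le> int b + n + 1")
      case b_pos: True
      define r where "r = nat (int b + n + 1)"
      have "(r, b) \<in> young lam"
        using True b_pos by (intro young_downward_closed[OF part ab(1) _ _ b1]) (auto simp: r_def)
      moreover have "int r - int b = n + 1" using b_pos by (simp add: r_def)
      ultimately have "b \<le> diag_col lam n" by (rule diag_col_ge)
      then show ?thesis using edge(2) by (simp add: le_max_iff_disj)
    next
      case False
      then have "real b + real_of_int n + 1 \<le> 0" by linarith
      then show ?thesis using edge(2) x by (simp add: le_max_iff_disj)
    qed
  next
    case False
    show ?thesis
    proof (cases "1 \<le> int a - n")
      case a_pos: True
      define c where "c = nat (int a - n)"
      have "(a, c) \<in> young lam"
        using False a_pos by (intro young_downward_closed[OF part ab(1) a1]) (auto simp: c_def)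
      moreover have "int a - int c = n" using a_pos by (simp add: c_def)
      ultimately have "a \<le> diag_row lam n" by (rule diag_row_ge)
      then show ?thesis using edge(1) by (simp add: le_max_iff_disj)
    next
      case a_small: False
      then have "real a \<le> real_of_int n" by linarith
      then show ?thesis using edge(1) x by (simp add: le_max_iff_disj)
    qed
  qed
qed

lemma omega_on_unit_interval:
  assumes part: "is_partition lam" and x: "real_of_int n \<le> x" "x \<le> real_of_int n + 1"
  shows "omega lam x = max (2 * real (diag_row lam n) - x) (2 * real (diag_col lam n) + x)"
    (is "_ = ?M")
proof -
  define S where "S = {y. \<exists>(a, b)\<in>young lam. (x, y) \<in> node_square a b}"
  have abs_le: "\<bar>x\<bar> \<le> ?M" by auto
  have upper: "y \<le> ?M" if "y \<in> S" for y
    using that node_height_le[OF part _ _ x] abs_le by (force simp: S_def)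
  have row_in: "2 * real (diag_row lam n) - x \<in> S" if nonempty: "diag_row lam n \<noteq> 0"
  proof -
    obtain b where b: "(diag_row lam n, b) \<in> young lam" "int (diag_row lam n) - int b = n"
      using diag_row_cases[of lam n] nonempty by auto
    then have "real (diag_row lam n) - real b = real_of_int n" by linarith
    then have "(x, 2 * real (diag_row lam n) - x) \<in> node_square (diag_row lam n) b"
      using x by (intro upper_right_edge_in_node_square) auto
    with b show ?thesis by (auto simp: S_def)
  qed
  have col_in: "2 * real (diag_col lam n) + x \<in> S" if nonempty: "diag_col lam n \<noteq> 0"
  proof -
    obtain a where a: "(a, diag_col lam n) \<in> young lam" "int a - int (diag_col lam n) = n + 1"
      using diag_col_cases[of lam n] nonempty by auto
    then have "real a - real (diag_col lam n) = real_of_int n + 1" by linarith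
    then have "(x, 2 * real (diag_col lam n) + x) \<in> node_square a (diag_col lam n)"
      using x by (intro upper_left_edge_in_node_square) auto
    with a show ?thesis by (auto simp: S_def)
  qed
  have omega_eq: "omega lam x = (if S = {} then \<bar>x\<bar> else max \<bar>x\<bar> (Sup S))"
    by (simp add: omega_def S_def)
  show ?thesis
  proof (cases "S = {}")
    case True
    then have "diag_row lam n = 0" "diag_col lam n = 0" using row_in col_in by auto
    then show ?thesis using omega_eq True by (simp add: max_def abs_if)
  next
    case False
    have bdd: "bdd_above S" using upper by (auto simp: bdd_above_def)
    have "Sup S \<le> ?M" using False upper by (intro cSup_least) auto
    moreover have "?M \<le> max \<bar>x\<bar> (Sup S)"
      using row_in col_in cSup_upper[OF _ bdd] by (fastforce simp: le_max_iff_disj)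
    ultimately have "max \<bar>x\<bar> (Sup S) = ?M" using abs_le by (intro antisym) auto
    then show ?thesis using omega_eq False by simp
  qed
qed

definition profile_slope :: "nat list \<Rightarrow> int \<Rightarrow> real" where
  "profile_slope lam n = (if int (diag_row lam n) \<le> int (diag_col lam n) + n then 1 else -1)"

lemma omega_affine_on_unit_interval:
  assumes part: "is_partition lam" and x: "real_of_int n \<le> x" "x \<le> real_of_int n + 1"
  shows "omega lam x = omega lam (real_of_int n) + profile_slope lam n * (x - real_of_int n)"
proof -
  note omega_x = omega_on_unit_interval[OF part x]
    and omega_n = omega_on_unit_interval[OF part, of n "real_of_int n"]
  consider "int (diag_row lam n) \<le> int (diag_col lam n) + n"
    | "int (diag_col lam n) + n + 1 \<le> int (diag_row lam n)"
    by linarith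
  then show ?thesis
  proof cases
    case 1
    then have "real (diag_row lam n) \<le> real (diag_col lam n) + real_of_int n" by linarith
    with 1 omega_x omega_n x show ?thesis by (simp add: profile_slope_def)
  next
    case 2
    then have "real (diag_col lam n) + real_of_int n + 1 \<le> real (diag_row lam n)" by linarith
    with 2 omega_x omega_n x show ?thesis by (simp add: profile_slope_def)
  qed
qed

lemma young_diagonal_bounds:
  assumes "is_partition lam" "(a, b) \<in> young lam"
  shows "1 - int (lam ! 0) \<le> int a - int b" "int a - int b \<le> int (length lam) - 1"
proof -
  have "b \<le> row_len lam a" "1 \<le> a" "a \<le> length lam"
    using assms(2) by (auto simp: young_iff_row_len row_len_def split: if_splits)
  moreover have "row_len lam a \<le> row_len lam 1" using row_len_antimono[OF assms(1) _ \<open>1 \<le> a\<close>] by simp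
  ultimately show "1 - int (lam ! 0) \<le> int a - int b" by (simp add: row_len_def split: if_splits)
  show "int a - int b \<le> int (length lam) - 1" using assms(2) by (auto simp: young_def)
qed

lemma diag_row_eq_0:
  assumes "is_partition lam" "n \<le> - int (lam ! 0) \<or> int (length lam) \<le> n"
  shows "diag_row lam n = 0"
  using diag_row_cases[of lam n] young_diagonal_bounds[OF assms(1)] assms(2) by force

lemma diag_col_eq_0:
  assumes "is_partition lam" "n + 1 \<le> - int (lam ! 0) \<or> int (length lam) - 1 \<le> n"
  shows "diag_col lam n = 0"
  using diag_col_cases[of lam n] young_diagonal_bounds[OF assms(1)] assms(2) by force

lemma omega_left_of_diagram:
  assumes "is_partition lam" "x \<le> - real (lam ! 0)"
  shows "omega lam x = - x"
proof -
  define n where "n = \<lceil>x\<rceil> - 1"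
  have x: "real_of_int n \<le> x" "x \<le> real_of_int n + 1" unfolding n_def by linarith+
  have "n + 1 \<le> - int (lam ! 0)" unfolding n_def using assms(2) by linarith
  then show ?thesis
    using omega_on_unit_interval[OF assms(1) x] diag_row_eq_0[OF assms(1)] diag_col_eq_0[OF assms(1)]
      assms(2) by simp
qed

lemma omega_right_of_diagram:
  assumes "is_partition lam" "real (length lam) \<le> x"
  shows "omega lam x = x"
proof -
  define n where "n = \<lfloor>x\<rfloor>"
  have x: "real_of_int n \<le> x" "x \<le> real_of_int n + 1" unfolding n_def by linarith+
  have "int (length lam) \<le> n" unfolding n_def using assms(2) by linarith
  then show ?thesis
    using omega_on_unit_interval[OF assms(1) x] diag_row_eq_0[OF assms(1)] diag_col_eq_0[OF assms(1)]
      assms(2) by simp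
qed

lemma first_part_pos: "is_partition lam \<Longrightarrow> lam \<noteq> [] \<Longrightarrow> 1 \<le> lam ! 0"
  using row_len_pos[of lam 1] by (simp add: row_len_def Suc_le_eq)

lemma profile_slope_first_part:
  assumes "is_partition lam" "lam \<noteq> []"
  shows "profile_slope lam (- int (lam ! 0)) = 1"
proof -
  have "(1, lam ! 0) \<in> young lam"
    using first_part_pos[OF assms] assms(2) by (auto simp: young_def Suc_le_eq)
  then have "lam ! 0 \<le> diag_col lam (- int (lam ! 0))" by (rule diag_col_ge) simp
  then show ?thesis using diag_row_eq_0[OF assms(1)] by (simp add: profile_slope_def)
qed

lemma profile_slope_last_row:
  assumes "is_partition lam" "lam \<noteq> []"
  shows "profile_slope lam (int (length lam) - 1) = -1"
proof -
  have "(length lam, 1) \<in> young lam"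
    using row_len_pos[OF assms(1), of "length lam"] assms(2) by (auto simp: young_iff_row_len Suc_le_eq)
  then have "length lam \<le> diag_row lam (int (length lam) - 1)" by (rule diag_row_ge) simp
  then show ?thesis using diag_col_eq_0[OF assms(1)] by (simp add: profile_slope_def)
qed

lemma omega_zero_pos:
  assumes "is_partition lam" "lam \<noteq> []"
  shows "0 < omega lam 0"
proof -
  have "(1, 1) \<in> young lam" using first_part_pos[OF assms] assms(2) by (auto simp: young_def Suc_le_eq)
  then have "1 \<le> diag_row lam 0" by (rule diag_row_ge) simp
  then show ?thesis using omega_on_unit_interval[OF assms(1), of 0 0] by simp
qed

text \<open>A rising step over \<open>[n, n + 1]\<close> is the upper left edge of the last node of a row \<open>a\<close>,
  which lies on the diagonal \<open>n + 1\<close>.\<close>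

lemma rising_step_ends_row:
  assumes part: "is_partition lam" and rising: "profile_slope lam n = 1"
  obtains a where "1 \<le> a" "n = int a - 1 - int (row_len lam a)"
proof -
  have le: "int (diag_row lam n) \<le> int (diag_col lam n) + n"
    using rising by (simp add: profile_slope_def split: if_splits)
  define a where "a = nat (int (diag_col lam n) + n + 1)"
  have a1: "1 \<le> a" and a_eq: "int a = int (diag_col lam n) + n + 1" using le by (auto simp: a_def)
  have "diag_col lam n \<le> row_len lam a"
  proof (cases "diag_col lam n = 0")
    case False
    then obtain a0 where a0: "(a0, diag_col lam n) \<in> young lam" "int a0 - int (diag_col lam n) = n + 1"
      using diag_col_cases[of lam n] by auto
    then have "int a0 = int a" using a_eq by linarith
    with a0 show ?thesis by (auto simp: young_iff_row_len)
  qed simp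
  moreover have "row_len lam a \<le> diag_col lam n"
  proof (rule ccontr)
    assume "\<not> ?thesis"
    then have "(a, diag_col lam n + 1) \<in> young lam" using a1 by (simp add: young_iff_row_len)
    then have "a \<le> diag_row lam n" by (rule diag_row_ge) (use a_eq in simp)
    then show False using le a_eq by linarith
  qed
  ultimately show ?thesis using a1 a_eq by (intro that[of a]) auto
qed

lemma consecutive_rising_steps:
  assumes part: "is_partition lam" and a: "1 \<le> a" "1 \<le> a'"
    and n: "n = int a - 1 - int (row_len lam a)" and n': "n + 1 = int a' - 1 - int (row_len lam a')"
  shows "a' = a + 1" "row_len lam a' = row_len lam a"
proof -
  have "a < a'"
  proof (rule ccontr)
    assume "\<not> a < a'"
    then have "row_len lam a \<le> row_len lam a'" using row_len_antimono[OF part a(2)] by simp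
    then show False using n n' \<open>\<not> a < a'\<close> by linarith
  qed
  moreover have "row_len lam a' \<le> row_len lam a" using row_len_antimono[OF part a(1)] \<open>a < a'\<close> by simp
  ultimately show "a' = a + 1" "row_len lam a' = row_len lam a" using n n' by linarith+
qed

text \<open>\<open>e\<close> consecutive rising steps come from \<open>e\<close> consecutive rows of equal length, which
  \<open>e\<close>-regularity only allows below the last row.\<close>

lemma rising_run_beyond_diagram:
  assumes part: "is_partition lam" and reg: "e_regular e lam" and e: "1 \<le> e"
    and rising: "\<forall>j<e. profile_slope lam (n + int j) = 1"
  shows "int (length lam) \<le> n"
proof -
  have "profile_slope lam n = 1" using rising[rule_format, of 0] e by simp
  then obtain a where a: "1 \<le> a" "n = int a - 1 - int (row_len lam a)"
    by (rule rising_step_ends_row[OF part])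
  have rows: "n + int j = int (a + j) - 1 - int (row_len lam (a + j))
      \<and> row_len lam (a + j) = row_len lam a" if "j < e" for j
    using that
  proof (induction j)
    case (Suc j)
    then have IH: "n + int j = int (a + j) - 1 - int (row_len lam (a + j))"
      "row_len lam (a + j) = row_len lam a" by auto
    have "profile_slope lam (n + int j + 1) = 1"
      using rising[rule_format, OF Suc.prems] by (simp add: ac_simps)
    then obtain a' where a': "1 \<le> a'" "n + int j + 1 = int a' - 1 - int (row_len lam a')"
      by (rule rising_step_ends_row[OF part])
    have "a' = a + j + 1" "row_len lam a' = row_len lam (a + j)"
      using consecutive_rising_steps[OF part _ a'(1) IH(1) a'(2)] a(1) by auto
    with IH a' show ?case by simp
  qed (use a in simp)
  have last: "row_len lam (a + (e - 1)) = row_len lam a" using rows[of "e - 1"] e by simp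
  show ?thesis
  proof (cases "a + (e - 1) \<le> length lam")
    case True
    then have "a - 1 + e - 1 < length lam" using e a(1) by linarith
    then have "lam ! (a - 1) > lam ! (a - 1 + e - 1)" using reg by (simp add: e_regular_def)
    moreover have "a + (e - 1) - 1 = a - 1 + e - 1" using a(1) e by linarith
    ultimately show ?thesis using True last a(1) by (simp add: row_len_def)
  next
    case False
    then have "row_len lam a = 0" using last by (simp add: row_len_def)
    then have "length lam < a" using row_len_pos[OF part a(1)] by linarith
    then show ?thesis using a \<open>row_len lam a = 0\<close> by linarith
  qed
qed

section \<open>Profiles with unit slopes and their flattening\<close>

lemma alpha_bounds:
  assumes "2 \<le> e" shows "0 \<le> alpha e" "alpha e < 1"
  using assms by (auto simp: alpha_def field_simps)

lemma antitone_by_unit_intervals: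
  fixes g :: "real \<Rightarrow> real"
  assumes unit: "\<And>n x y. real_of_int n \<le> x \<Longrightarrow> x \<le> y \<Longrightarrow> y \<le> real_of_int n + 1 \<Longrightarrow> g y \<le> g x"
    and "x \<le> y"
  shows "g y \<le> g x"
proof -
  have "g y \<le> g x" if "\<lfloor>x\<rfloor> \<le> m" "x \<le> y" "\<lfloor>y\<rfloor> = m" for m y
    using that
  proof (induction m arbitrary: y rule: int_ge_induct)
    case base
    then show ?case by (intro unit[of "\<lfloor>x\<rfloor>"]) linarith+
  next
    case (step n)
    have "g y \<le> g (real_of_int (n + 1))" using step.prems by (intro unit[of "n + 1"]) linarith+
    moreover have "g (real_of_int (n + 1)) \<le> g x"
    proof (cases "real_of_int n \<le> x")
      case True
      then show ?thesis using step.hyps by (intro unit[of n]) linarith+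
    next
      case False
      then have "g (real_of_int n) \<le> g x" using step.IH[of "real_of_int n"] by simp
      moreover have "g (real_of_int (n + 1)) \<le> g (real_of_int n)" by (intro unit[of n]) auto
      ultimately show ?thesis by linarith
    qed
    ultimately show ?case by linarith
  qed
  then show ?thesis using assms(2) floor_mono by blast
qed

text \<open>The properties of the profile of a nonempty \<open>e\<close>-regular partition on which the flattening
  argument rests; \<open>e\<close>-regularity enters only through \<open>rising_run_bound\<close>.\<close>

locale regular_profile =
  fixes e :: nat and lam :: "nat list" and slope :: "int \<Rightarrow> real" and L R :: int
  assumes e_ge_2: "2 \<le> e"
    and omega_affine: "\<And>n x. real_of_int n \<le> x \<Longrightarrow> x \<le> real_of_int n + 1 \<Longrightarrow>
      omega lam x = omega lam (real_of_int n) + slope n * (x - real_of_int n)"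
    and slope_cases: "\<And>n. slope n = 1 \<or> slope n = -1"
    and left_tail: "\<And>x. x \<le> real_of_int L \<Longrightarrow> omega lam x = - x"
    and right_tail: "\<And>x. real_of_int R \<le> x \<Longrightarrow> omega lam x = x"
    and L_neg: "L < 0" and R_pos: "0 < R"
    and slope_L: "slope L = 1" and slope_before_R: "slope (R - 1) = -1"
    and rising_run_bound: "\<And>n. (\<forall>j<e. slope (n + int j) = 1) \<Longrightarrow> R \<le> n"
    and omega_zero_pos: "0 < omega lam 0"
begin

abbreviation \<alpha> :: real where "\<alpha> \<equiv> alpha e"

lemmas alpha_nonneg = alpha_bounds(1)[OF e_ge_2] and alpha_less_1 = alpha_bounds(2)[OF e_ge_2]

lemma alpha_rise: "(1 - \<alpha>) * (real e - 1) = 1 + \<alpha>"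
  using e_ge_2 by (simp add: alpha_def field_simps)

lemma one_plus_alpha_le: "1 + \<alpha> \<le> real e"
  using alpha_less_1 e_ge_2 by linarith

lemma slope_before_L:
  assumes "n < L" shows "slope n = -1"
proof -
  have "omega lam (real_of_int n + 1) = omega lam (real_of_int n) + slope n"
    using omega_affine[of n "real_of_int n + 1"] by simp
  moreover have "omega lam (real_of_int n) = - real_of_int n"
    "omega lam (real_of_int n + 1) = - real_of_int n - 1"
    using left_tail[of "real_of_int n"] left_tail[of "real_of_int n + 1"] assms by linarith+
  ultimately show ?thesis by linarith
qed

lemma slope_after_R:
  assumes "R \<le> n" shows "slope n = 1"
proof -
  have "omega lam (real_of_int n + 1) = omega lam (real_of_int n) + slope n"
    using omega_affine[of n "real_of_int n + 1"] by simp
  moreover have "omega lam (real_of_int n) = real_of_int n"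
    "omega lam (real_of_int n + 1) = real_of_int n + 1"
    using right_tail[of "real_of_int n"] right_tail[of "real_of_int n + 1"] assms by linarith+
  ultimately show ?thesis by linarith
qed

lemma omega_affine_on_run:
  assumes run: "\<forall>m. p \<le> m \<and> m < q \<longrightarrow> slope m = d"
    and x: "real_of_int p \<le> x" "x \<le> real_of_int q"
  shows "omega lam x = omega lam (real_of_int p) + d * (x - real_of_int p)"
proof -
  have "\<forall>x. real_of_int p \<le> x \<and> x \<le> real_of_int k \<longrightarrow>
      omega lam x = omega lam (real_of_int p) + d * (x - real_of_int p)" if "p \<le> k" "k \<le> q" for k
    using that
  proof (induction k rule: int_ge_induct)
    case (step k)
    show ?case
    proof (intro allI impI)
      fix x assume x: "real_of_int p \<le> x \<and> x \<le> real_of_int (k + 1)"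
      have IH: "omega lam y = omega lam (real_of_int p) + d * (y - real_of_int p)"
        if "real_of_int p \<le> y" "y \<le> real_of_int k" for y
        by (rule step.IH[rule_format]) (use step.prems that in auto)
      show "omega lam x = omega lam (real_of_int p) + d * (x - real_of_int p)"
      proof (cases "x \<le> real_of_int k")
        case True
        then show ?thesis using x by (intro IH) auto
      next
        case False
        have "omega lam x = omega lam (real_of_int k) + slope k * (x - real_of_int k)"
          using False x by (intro omega_affine) auto
        moreover have "slope k = d" using run step.hyps step.prems by simp
        moreover have "omega lam (real_of_int k)
            = omega lam (real_of_int p) + d * (real_of_int k - real_of_int p)"
          using step.hyps by (intro IH) auto
        ultimately show ?thesis by (simp add: algebra_simps)
      qed
    qed
  qed (use order_antisym in fastforce)
  moreover have "p \<le> q" using x by linarith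
  ultimately show ?thesis using x by blast
qed

lemma omega_lipschitz: "\<bar>omega lam x - omega lam y\<bar> \<le> \<bar>x - y\<bar>"
proof -
  have unit: "\<bar>omega lam y - omega lam x\<bar> \<le> y - x"
    if "real_of_int n \<le> x" "x \<le> y" "y \<le> real_of_int n + 1" for n x y
    using omega_affine[of n x] omega_affine[of n y] slope_cases[of n] that by (auto simp: algebra_simps)
  have "omega lam y - omega lam x \<le> y - x \<and> omega lam x - omega lam y \<le> y - x" if "x \<le> y" for x y
  proof -
    have "(\<lambda>z. omega lam z - z) y \<le> (\<lambda>z. omega lam z - z) x"
    proof (rule antitone_by_unit_intervals[OF _ that])
      fix n x' y' assume "real_of_int n \<le> x'" "x' \<le> y'" "y' \<le> real_of_int n + 1"
      then show "omega lam y' - y' \<le> omega lam x' - x'" using unit[of n x' y'] by linarith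
    qed
    moreover have "(\<lambda>z. - omega lam z - z) y \<le> (\<lambda>z. - omega lam z - z) x"
    proof (rule antitone_by_unit_intervals[OF _ that])
      fix n x' y' assume "real_of_int n \<le> x'" "x' \<le> y'" "y' \<le> real_of_int n + 1"
      then show "- omega lam y' - y' \<le> - omega lam x' - x'" using unit[of n x' y'] by linarith
    qed
    ultimately show ?thesis by simp
  qed
  from this[of x y] this[of y x] show ?thesis by (cases "x \<le> y") auto
qed

text \<open>Shearing by the slope \<open>\<alpha>\<close> turns the lines used by the flattening into horizontal lines.\<close>

definition sheared :: "real \<Rightarrow> real" where
  "sheared x = omega lam x - \<alpha> * x"

lemma sheared_lipschitz: "\<bar>sheared x - sheared y\<bar> \<le> 2 * \<bar>x - y\<bar>"
proof -
  have "\<bar>\<alpha> * (x - y)\<bar> \<le> \<bar>x - y\<bar>"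
    using alpha_nonneg alpha_less_1 by (simp add: abs_mult mult_left_le_one_le)
  then show ?thesis
    using omega_lipschitz[of x y] by (simp add: sheared_def abs_le_iff algebra_simps)
qed

definition running_max :: "real \<Rightarrow> real \<Rightarrow> real" where
  "running_max s c = Sup (sheared ` {s..c})"

lemma bdd_above_sheared: "bdd_above (sheared ` {s..c})"
proof -
  have "sheared t \<le> sheared s + 2 * \<bar>c - s\<bar>" if "t \<in> {s..c}" for t
    using sheared_lipschitz[of t s] that by auto
  then show ?thesis unfolding bdd_above_def by (intro exI[of _ "sheared s + 2 * \<bar>c - s\<bar>"]) auto
qed

lemma running_max_ge: "s \<le> t \<Longrightarrow> t \<le> c \<Longrightarrow> sheared t \<le> running_max s c"
  unfolding running_max_def by (rule cSup_upper) (use bdd_above_sheared in auto)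

lemma running_max_le: "s \<le> c \<Longrightarrow> (\<And>t. s \<le> t \<Longrightarrow> t \<le> c \<Longrightarrow> sheared t \<le> v) \<Longrightarrow> running_max s c \<le> v"
  unfolding running_max_def by (rule cSup_least) auto

lemma running_max_eqI:
  "s \<le> t \<Longrightarrow> t \<le> c \<Longrightarrow> sheared t = v \<Longrightarrow> (\<And>t. s \<le> t \<Longrightarrow> t \<le> c \<Longrightarrow> sheared t \<le> v)
    \<Longrightarrow> running_max s c = v"
  using running_max_ge[of s t c] running_max_le[of s c v] by force

lemma running_max_antimono: "s \<le> s' \<Longrightarrow> s' \<le> c \<Longrightarrow> running_max s' c \<le> running_max s c"
  by (rule running_max_le) (auto intro: running_max_ge)

lemma running_max_mono: "s \<le> c \<Longrightarrow> c \<le> c' \<Longrightarrow> running_max s c \<le> running_max s c'"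
  by (rule running_max_le) (auto intro: running_max_ge)

lemma running_max_self: "running_max c c = sheared c"
  by (rule running_max_eqI[of c c]) auto

lemma running_max_lipschitz:
  assumes "s \<le> s'" "s' \<le> c"
  shows "running_max s c \<le> running_max s' c + 2 * (s' - s)"
proof (rule running_max_le)
  fix t assume t: "s \<le> t" "t \<le> c"
  show "sheared t \<le> running_max s' c + 2 * (s' - s)"
  proof (cases "s' \<le> t")
    case True
    then show ?thesis using t assms running_max_ge[of s' t c] by simp
  next
    case False
    then show ?thesis
      using sheared_lipschitz[of t s'] running_max_ge[of s' s' c] assms t by simp
  qed
qed (use assms in simp)

text \<open>\<open>envelope c\<close> is the least nonincreasing majorant of \<open>sheared\<close> on \<open>(-\<infinity>, c]\<close>, continued by
  \<open>sheared\<close> itself to the right of \<open>c\<close>; \<open>flattened c\<close> is the result of the flattening at all outer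
  corners up to \<open>c\<close>, in closed form.\<close>

definition envelope :: "int \<Rightarrow> real \<Rightarrow> real" where
  "envelope c s = (if s \<le> real_of_int c then running_max s (real_of_int c) else sheared s)"

definition flattened :: "int \<Rightarrow> real \<Rightarrow> real" where
  "flattened c s = \<alpha> * s + envelope c s"

lemma envelope_right: "real_of_int c \<le> s \<Longrightarrow> envelope c s = sheared s"
  by (cases "s = real_of_int c") (auto simp: envelope_def running_max_self)

lemma sheared_le_envelope: "sheared s \<le> envelope c s"
  by (simp add: envelope_def running_max_ge)

lemma flattened_right: "real_of_int c \<le> s \<Longrightarrow> flattened c s = omega lam s"
  by (simp add: flattened_def envelope_right sheared_def)

lemma envelope_lipschitz: "\<bar>envelope c x - envelope c y\<bar> \<le> 2 * \<bar>x - y\<bar>"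
proof -
  have left: "\<bar>envelope c x - envelope c y\<bar> \<le> 2 * (y - x)" if "x \<le> y" "y \<le> real_of_int c" for x y
    using that running_max_antimono[of x y "real_of_int c"] running_max_lipschitz[of x y "real_of_int c"]
    by (simp add: envelope_def)
  have "\<bar>envelope c x - envelope c y\<bar> \<le> 2 * (y - x)" if "x \<le> y" for x y
  proof (cases "y \<le> real_of_int c")
    case True
    then show ?thesis using left that by simp
  next
    case y: False
    show ?thesis
    proof (cases "x \<le> real_of_int c")
      case True
      have "\<bar>envelope c x - envelope c (real_of_int c)\<bar> \<le> 2 * (real_of_int c - x)"
        using True by (intro left) auto
      moreover have "\<bar>envelope c (real_of_int c) - envelope c y\<bar> \<le> 2 * (y - real_of_int c)"
        using sheared_lipschitz[of "real_of_int c" y] y by (simp add: envelope_right)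
      ultimately show ?thesis by (simp add: abs_le_iff)
    next
      case False
      then show ?thesis using sheared_lipschitz[of x y] that y by (simp add: envelope_right)
    qed
  qed
  from this[of x y] this[of y x] show ?thesis by (cases "x \<le> y") (auto simp: abs_minus_commute)
qed

lemma continuous_envelope: "continuous_on UNIV (envelope c)"
proof -
  have "2-lipschitz_on UNIV (envelope c)"
    by (rule lipschitz_onI) (use envelope_lipschitz in \<open>auto simp: dist_real_def\<close>)
  then show ?thesis by (rule lipschitz_on_continuous_on)
qed

lemma continuous_flattened: "continuous_on UNIV (flattened c)"
  unfolding flattened_def by (intro continuous_intros continuous_envelope)

lemma omega_has_slope_derivative:
  assumes "real_of_int n < s" "s < real_of_int n + 1"
  shows "(omega lam has_real_derivative slope n) (at s)"
proof -
  have "((\<lambda>x. omega lam (real_of_int n) + slope n * (x - real_of_int n)) has_real_derivative slope n) (at s)"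
    by (auto intro!: derivative_eq_intros)
  then show ?thesis
  proof (rule has_field_derivative_transform_within_open[where S = "{real_of_int n<..<real_of_int n + 1}"])
    fix x assume "x \<in> {real_of_int n<..<real_of_int n + 1}"
    then show "omega lam (real_of_int n) + slope n * (x - real_of_int n) = omega lam x"
      using omega_affine[of n x] by simp
  qed (use assms in auto)
qed

lemma derivative_on_unit_interval_iff:
  "(\<forall>s\<in>{real_of_int n<..<real_of_int n + 1}. (omega lam has_real_derivative d) (at s)) \<longleftrightarrow> slope n = d"
proof
  assume "\<forall>s\<in>{real_of_int n<..<real_of_int n + 1}. (omega lam has_real_derivative d) (at s)"
  then have "(omega lam has_real_derivative d) (at (real_of_int n + 1 / 2))" by simp
  moreover have "(omega lam has_real_derivative slope n) (at (real_of_int n + 1 / 2))"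
    by (rule omega_has_slope_derivative) auto
  ultimately show "slope n = d" by (rule DERIV_unique[symmetric])
qed (use omega_has_slope_derivative in auto)

lemma outer_corners_eq: "outer_corners lam = {c. slope (c - 1) = 1 \<and> slope c = -1}"
  using derivative_on_unit_interval_iff[of "_ - 1"]
  by (auto simp: outer_corners_def derivative_on_unit_interval_iff)

lemma inner_corners_eq: "inner_corners lam = {c. slope (c - 1) = -1 \<and> slope c = 1}"
  using derivative_on_unit_interval_iff[of "_ - 1"]
  by (auto simp: inner_corners_def derivative_on_unit_interval_iff)

lemma outer_corners_subset: "outer_corners lam \<subseteq> {L..R}"
proof
  fix c assume "c \<in> outer_corners lam"
  then show "c \<in> {L..R}"
    using slope_before_L[of "c - 1"] slope_after_R[of c] by (force simp: outer_corners_eq)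
qed

lemma inner_corners_subset: "inner_corners lam \<subseteq> {L..R}"
proof
  fix c assume "c \<in> inner_corners lam"
  then show "c \<in> {L..R}"
    using slope_before_L[of c] slope_after_R[of "c - 1"] by (force simp: inner_corners_eq)
qed

lemma finite_outer_corners: "finite (outer_corners lam)"
  using outer_corners_subset by (rule finite_subset) simp

lemma Min_inner_corners: "Min (inner_corners lam) = L"
  using inner_corners_subset slope_before_L[of "L - 1"] slope_L
  by (intro Min_eqI finite_subset[OF inner_corners_subset]) (auto simp: inner_corners_eq)

lemma Max_inner_corners: "Max (inner_corners lam) = R"
  using inner_corners_subset slope_after_R[of R] slope_before_R
  by (intro Max_eqI finite_subset[OF inner_corners_subset]) (auto simp: inner_corners_eq)

lemma sheared_on_descent:
  assumes "\<forall>m. p \<le> m \<and> m < q \<longrightarrow> slope m = -1" "real_of_int p \<le> x" "x \<le> real_of_int q"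
  shows "sheared x = sheared (real_of_int p) - (1 + \<alpha>) * (x - real_of_int p)"
  using omega_affine_on_run[of p q "-1" x] assms by (simp add: sheared_def algebra_simps)

lemma sheared_on_ascent:
  assumes "\<forall>m. p \<le> m \<and> m < q \<longrightarrow> slope m = 1" "real_of_int p \<le> x" "x \<le> real_of_int q"
  shows "sheared x = sheared (real_of_int q) - (1 - \<alpha>) * (real_of_int q - x)"
  using omega_affine_on_run[of p q 1 x] omega_affine_on_run[of p q 1 "real_of_int q"] assms
  by (simp add: sheared_def algebra_simps)

lemma sheared_antimono_on_descent:
  assumes descent: "\<forall>m. p \<le> m \<and> m < q \<longrightarrow> slope m = -1"
    and "real_of_int p \<le> x" "x \<le> y" "y \<le> real_of_int q"
  shows "sheared y \<le> sheared x"
proof -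
  have "(1 + \<alpha>) * (x - real_of_int p) \<le> (1 + \<alpha>) * (y - real_of_int p)"
    using assms alpha_nonneg by (intro mult_left_mono) auto
  then show ?thesis using sheared_on_descent[OF descent, of x] sheared_on_descent[OF descent, of y] assms
    by linarith
qed

lemma envelope_antimono_on_descent:
  assumes descent: "\<forall>m. c \<le> m \<and> m < d \<longrightarrow> slope m = -1"
    and "x \<le> y" "y \<le> real_of_int d"
  shows "envelope c y \<le> envelope c x"
proof (cases "y \<le> real_of_int c")
  case True
  then show ?thesis using assms running_max_antimono by (simp add: envelope_def)
next
  case False
  have "envelope c y \<le> sheared (max x (real_of_int c))"
    using False assms by (auto simp: envelope_right intro: sheared_antimono_on_descent[OF descent])
  also have "\<dots> \<le> envelope c x"
    using running_max_antimono[of x "real_of_int c" "real_of_int c"]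
    by (cases "x \<le> real_of_int c") (auto simp: envelope_def running_max_self)
  finally show ?thesis .
qed

definition valley :: "int \<Rightarrow> int \<Rightarrow> int \<Rightarrow> bool" where
  "valley c0 i c \<longleftrightarrow> c0 < i \<and> i < c \<and> c - i \<le> int e - 1
     \<and> (\<forall>m. c0 \<le> m \<and> m < i \<longrightarrow> slope m = -1) \<and> (\<forall>m. i \<le> m \<and> m < c \<longrightarrow> slope m = 1)"

text \<open>The climb of the valley is shorter than \<open>e\<close> steps, because a run of \<open>e\<close> rising steps starts beyond
  \<open>R\<close>, where the profile has no outer corners.\<close>

lemma valley_between_outer_corners:
  assumes "c0 < c" and start: "slope c0 = -1" and corner: "c \<in> outer_corners lam"
    and no_corner: "\<And>m. c0 < m \<Longrightarrow> m < c \<Longrightarrow> m \<notin> outer_corners lam"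
  obtains i where "valley c0 i c"
proof -
  have c: "slope (c - 1) = 1" "slope c = -1" using corner by (auto simp: outer_corners_eq)
  define I where "I = {m. c0 < m \<and> m < c \<and> slope m = 1}"
  define i where "i = Min I"
  have "finite I" by (rule finite_subset[of _ "{c0..c}"]) (auto simp: I_def)
  moreover have "c - 1 \<in> I" using \<open>c0 < c\<close> start c by (cases "c - 1 = c0") (auto simp: I_def)
  ultimately have i: "i \<in> I" "\<And>m. m \<in> I \<Longrightarrow> i \<le> m" unfolding i_def using Min_in by auto
  have descent: "slope m = -1" if "c0 \<le> m" "m < i" for m
    using i(2)[of m] that start slope_cases[of m] i(1) by (cases "m = c0") (auto simp: I_def)
  have "m < c \<longrightarrow> slope m = 1" if "i \<le> m" for m
    using that
  proof (induction m rule: int_ge_induct)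
    case base
    then show ?case using i(1) by (simp add: I_def)
  next
    case (step m)
    show ?case
    proof
      assume "m + 1 < c"
      have "c0 < m + 1" using step.hyps i(1) by (simp add: I_def)
      then have "slope m = 1" "m + 1 \<notin> outer_corners lam"
        using step \<open>m + 1 < c\<close> no_corner by auto
      then show "slope (m + 1) = 1" using slope_cases[of "m + 1"] by (auto simp: outer_corners_eq)
    qed
  qed
  then have ascent: "slope m = 1" if "i \<le> m" "m < c" for m using that by blast
  have "c - i \<le> int e - 1"
  proof (rule ccontr)
    assume "\<not> ?thesis"
    then have "\<forall>j<e. slope (c - int e + int j) = 1" using ascent by auto
    then have "R \<le> c - int e" by (rule rising_run_bound)
    then show False using slope_after_R[of c] c(2) e_ge_2 by simp
  qed
  with i(1) descent ascent show ?thesis by (intro that) (auto simp: valley_def I_def)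
qed

lemma valley_descent: "valley c0 i c \<Longrightarrow> \<forall>m. c0 \<le> m \<and> m < i \<longrightarrow> slope m = -1"
  and valley_ascent: "valley c0 i c \<Longrightarrow> \<forall>m. i \<le> m \<and> m < c \<longrightarrow> slope m = 1"
  by (auto simp: valley_def)

lemma valley_sheared_descent:
  "valley c0 i c \<Longrightarrow> real_of_int c0 \<le> x \<Longrightarrow> x \<le> real_of_int i
    \<Longrightarrow> sheared x = sheared (real_of_int c0) - (1 + \<alpha>) * (x - real_of_int c0)"
  by (rule sheared_on_descent[OF valley_descent])

lemma valley_sheared_ascent:
  "valley c0 i c \<Longrightarrow> real_of_int i \<le> x \<Longrightarrow> x \<le> real_of_int c
    \<Longrightarrow> sheared x = sheared (real_of_int c) - (1 - \<alpha>) * (real_of_int c - x)"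
  by (rule sheared_on_ascent[OF valley_ascent])

lemma valley_climb_le: "valley c0 i c \<Longrightarrow> (1 - \<alpha>) * (real_of_int c - real_of_int i) \<le> 1 + \<alpha>"
  using alpha_rise alpha_less_1 mult_left_mono[of "real_of_int c - real_of_int i" "real e - 1" "1 - \<alpha>"]
  by (auto simp: valley_def)

lemma valley_descent_ge: "valley c0 i c \<Longrightarrow> 1 + \<alpha> \<le> (1 + \<alpha>) * (real_of_int i - real_of_int c0)"
  using alpha_nonneg mult_left_mono[of 1 "real_of_int i - real_of_int c0" "1 + \<alpha>"]
  by (auto simp: valley_def)

lemma valley_sheared_le_end:
  assumes "valley c0 i c" "real_of_int i \<le> t" "t \<le> real_of_int c"
  shows "sheared t \<le> sheared (real_of_int c)"
  using valley_sheared_ascent[OF assms] assms(3) alpha_less_1 by (simp add: mult_nonneg_nonneg)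

lemma valley_sheared_le_start:
  assumes "valley c0 i c" "real_of_int c0 \<le> t" "t \<le> real_of_int c"
  shows "sheared t \<le> sheared (real_of_int c0)"
proof (cases "t \<le> real_of_int i")
  case True
  then show ?thesis
    using valley_sheared_descent[OF assms(1,2) True] assms alpha_nonneg by (simp add: mult_nonneg_nonneg)
next
  case False
  have "sheared t \<le> sheared (real_of_int c)"
    using False assms by (intro valley_sheared_le_end[OF assms(1)]) auto
  also have "\<dots> \<le> sheared (real_of_int i) + (1 + \<alpha>)"
    using valley_sheared_ascent[OF assms(1), of "real_of_int i"] valley_climb_le[OF assms(1)] assms(1)
    by (simp add: valley_def)
  also have "\<dots> \<le> sheared (real_of_int c0)"
    using valley_sheared_descent[OF assms(1), of "real_of_int i"] valley_descent_ge[OF assms(1)] assms(1)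
    by (simp add: valley_def)
  finally show ?thesis .
qed

lemma valley_sheared_rise:
  assumes "valley c0 i c" "real_of_int c0 \<le> s" "s \<le> t" "t \<le> real_of_int c"
  shows "sheared t - sheared s \<le> 1 + \<alpha>"
proof (cases "t \<le> real_of_int i")
  case True
  have "(1 + \<alpha>) * (s - real_of_int c0) \<le> (1 + \<alpha>) * (t - real_of_int c0)"
    using assms alpha_nonneg by (intro mult_left_mono) auto
  then show ?thesis
    using valley_sheared_descent[OF assms(1), of s] valley_sheared_descent[OF assms(1), of t] assms True
      alpha_nonneg by linarith
next
  case False
  define s' where "s' = max s (real_of_int i)"
  have "sheared s' \<le> sheared s"
  proof (cases "s \<le> real_of_int i")
    case True
    then have "s' = real_of_int i" by (simp add: s'_def)
    moreover have "(1 + \<alpha>) * (s - real_of_int c0) \<le> (1 + \<alpha>) * (real_of_int i - real_of_int c0)"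
      using True alpha_nonneg by (intro mult_left_mono) auto
    ultimately show ?thesis
      using valley_sheared_descent[OF assms(1), of s] valley_sheared_descent[OF assms(1), of "real_of_int i"]
        assms(1,2) True by (auto simp: valley_def)
  qed (simp add: s'_def)
  moreover have "(1 - \<alpha>) * (t - s') \<le> (1 - \<alpha>) * (real_of_int c - real_of_int i)"
    using assms alpha_less_1 by (intro mult_left_mono) (auto simp: s'_def)
  ultimately show ?thesis
    using valley_sheared_ascent[OF assms(1), of s'] valley_sheared_ascent[OF assms(1), of t]
      valley_climb_le[OF assms(1)] assms False by (auto simp: s'_def algebra_simps)
qed

lemma valley_envelope_less:
  assumes "valley c0 i c" "real_of_int i \<le> s" "s < real_of_int c"
  shows "envelope c0 s < sheared (real_of_int c)"
proof -
  have "envelope c0 s = sheared s" using assms by (intro envelope_right) (simp add: valley_def)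
  then show ?thesis
    using valley_sheared_ascent[OF assms(1,2)] assms alpha_less_1 by simp
qed

lemma sheared_unbounded_left:
  obtains s where "s \<le> b" "v \<le> sheared s"
proof
  define s where "s = min b (real_of_int L) - \<bar>v\<bar>"
  show "s \<le> b" by (simp add: s_def)
  have "min b (real_of_int L) \<le> 0" using L_neg by simp
  then have "s \<le> 0" using abs_ge_self[of v] by (auto simp: s_def)
  have "v \<le> - s" using \<open>min b (real_of_int L) \<le> 0\<close> abs_ge_self[of v] by (auto simp: s_def)
  also have "\<dots> \<le> - s - \<alpha> * s" using \<open>s \<le> 0\<close> alpha_nonneg by (simp add: mult_nonneg_nonpos)
  also have "\<dots> = sheared s" using left_tail[of s] by (simp add: s_def sheared_def)
  finally show "v \<le> sheared s" .
qed

lemma valley_flat_line_meets: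
  assumes valley: "valley c0 i c"
  shows "{s. s < real_of_int c \<and> flattened c0 s = omega lam (real_of_int c) + \<alpha> * (s - real_of_int c)}
    = {s. s \<le> real_of_int i \<and> envelope c0 s = sheared (real_of_int c)}"
proof -
  have line_iff: "flattened c0 s = omega lam (real_of_int c) + \<alpha> * (s - real_of_int c)
      \<longleftrightarrow> envelope c0 s = sheared (real_of_int c)" for s
    by (auto simp: flattened_def sheared_def algebra_simps)
  have "s \<le> real_of_int i" if "s < real_of_int c" "envelope c0 s = sheared (real_of_int c)" for s
    using that valley_envelope_less[OF valley, of s] by force
  with line_iff valley show ?thesis by (auto simp: valley_def)
qed

text \<open>In a valley, the flattening line through the outer corner \<open>c\<close> meets the graph of
  \<open>flattened c0\<close> last at the largest point of the descent where the envelope has dropped to the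
  level of \<open>c\<close>; the intermediate value theorem guarantees that this point exists.\<close>

lemma valley_flat_point:
  assumes valley: "valley c0 i c"
  obtains h where "flat_point e lam c (flattened c0) = h" "h \<le> real_of_int i"
    "envelope c0 h = sheared (real_of_int c)"
proof -
  define P where "P = {s. s \<le> real_of_int i \<and> envelope c0 s = sheared (real_of_int c)}"
  have "{s. s < real_of_int c \<and> flattened c0 s = omega lam (real_of_int c) + \<alpha> * (s - real_of_int c)} = P"
    unfolding P_def using valley by (rule valley_flat_line_meets)
  then have flat_point: "flat_point e lam c (flattened c0) = Sup P"
    by (simp add: flat_point_def)
  obtain s0 where s0: "s0 \<le> real_of_int i" "sheared (real_of_int c) \<le> sheared s0"
    by (rule sheared_unbounded_left)
  have "envelope c0 (real_of_int i) \<le> sheared (real_of_int c)"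
    using valley_envelope_less[OF valley, of "real_of_int i"] valley by (simp add: valley_def)
  moreover have "sheared (real_of_int c) \<le> envelope c0 s0"
    using s0(2) sheared_le_envelope[of s0 c0] by linarith
  moreover have "continuous_on {s0..real_of_int i} (envelope c0)"
    using continuous_envelope by (rule continuous_on_subset) simp
  ultimately obtain s1 where "s0 \<le> s1" "s1 \<le> real_of_int i" "envelope c0 s1 = sheared (real_of_int c)"
    using IVT2'[of "envelope c0" "real_of_int i" "sheared (real_of_int c)" s0] s0(1) by blast
  then have "P \<noteq> {}" by (auto simp: P_def)
  moreover have "bdd_above P" by (auto simp: P_def bdd_above_def)
  moreover have "closed P"
    unfolding P_def using continuous_envelope
    by (intro closed_Collect_conj closed_Collect_le closed_Collect_eq continuous_intros) auto
  ultimately have "Sup P \<in> P" by (rule closed_contains_Sup)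
  then show ?thesis using flat_point by (intro that) (auto simp: P_def)
qed

lemma valley_running_max_after_flat_point:
  assumes valley: "valley c0 i c"
    and h: "h \<le> real_of_int i" "envelope c0 h = sheared (real_of_int c)"
    and s: "h \<le> s" "s \<le> real_of_int c"
  shows "running_max s (real_of_int c) = sheared (real_of_int c)"
proof (rule running_max_eqI[of s "real_of_int c"])
  fix t assume t: "s \<le> t" "t \<le> real_of_int c"
  show "sheared t \<le> sheared (real_of_int c)"
  proof (cases "t \<le> real_of_int i")
    case True
    then show ?thesis
      using sheared_le_envelope[of t c0] envelope_antimono_on_descent[OF valley_descent[OF valley], of h t]
        h s t by simp
  qed (use valley_sheared_le_end[OF valley] t in simp)
qed (use s in auto)

lemma valley_running_max_before_flat_point:
  assumes valley: "valley c0 i c"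
    and h: "h \<le> real_of_int i" "envelope c0 h = sheared (real_of_int c)"
    and s: "s < h"
  shows "running_max s (real_of_int c) = envelope c0 s"
proof (rule antisym)
  show "running_max s (real_of_int c) \<le> envelope c0 s"
  proof (rule running_max_le)
    fix t assume t: "s \<le> t" "t \<le> real_of_int c"
    show "sheared t \<le> envelope c0 s"
    proof (cases "t \<le> real_of_int i")
      case True
      then show ?thesis
        using sheared_le_envelope[of t c0] envelope_antimono_on_descent[OF valley_descent[OF valley] t(1)]
        by simp
    next
      case False
      then show ?thesis
        using valley_sheared_le_end[OF valley, of t] t h s
          envelope_antimono_on_descent[OF valley_descent[OF valley], of s h] by simp
    qed
  qed (use s h valley in \<open>auto simp: valley_def\<close>)
  show "envelope c0 s \<le> running_max s (real_of_int c)"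
    using s h valley running_max_mono[of s "real_of_int c0" "real_of_int c"] running_max_ge[of s s]
    by (auto simp: envelope_def valley_def)
qed

lemma flat_step_valley:
  assumes valley: "valley c0 i c"
  shows "flat_step e lam c (flattened c0) = flattened c"
proof
  fix s
  obtain h where h: "flat_point e lam c (flattened c0) = h" "h \<le> real_of_int i"
    "envelope c0 h = sheared (real_of_int c)"
    using valley_flat_point[OF valley] .
  consider "real_of_int c < s" | "h \<le> s" "s \<le> real_of_int c" | "s < h" by linarith
  then show "flat_step e lam c (flattened c0) s = flattened c s"
  proof cases
    case 1
    then show ?thesis using valley h(1) by (simp add: flat_step_def flattened_right valley_def)
  next
    case 2
    then show ?thesis
      using valley_running_max_after_flat_point[OF valley h(2,3) 2] h(1)
      by (simp add: flat_step_def flattened_def envelope_def sheared_def algebra_simps)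
  next
    case 3
    then show ?thesis
      using valley_running_max_before_flat_point[OF valley h(2,3) 3] h(1,2) valley
      by (simp add: flat_step_def flattened_def envelope_def valley_def)
  qed
qed

lemma sheared_antimono_before_L: "x \<le> y \<Longrightarrow> y \<le> real_of_int L \<Longrightarrow> sheared y \<le> sheared x"
  using left_tail[of x] left_tail[of y] alpha_nonneg mult_left_mono[of x y "1 + \<alpha>"]
  by (simp add: sheared_def algebra_simps)

lemma flattened_before_L: "flattened (L - 1) = omega lam"
proof
  fix s
  show "flattened (L - 1) s = omega lam s"
  proof (cases "s \<le> real_of_int (L - 1)")
    case True
    have "running_max s (real_of_int (L - 1)) = sheared s"
    proof (rule running_max_eqI[of s s])
      fix t assume "s \<le> t" "t \<le> real_of_int (L - 1)"
      then show "sheared t \<le> sheared s" by (intro sheared_antimono_before_L) auto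
    qed (use True in auto)
    then show ?thesis using True by (simp add: flattened_def envelope_def sheared_def)
  qed (simp add: flattened_right)
qed

abbreviation corners :: "int list" where
  "corners \<equiv> sorted_list_of_set (outer_corners lam)"

lemma set_corners: "set corners = outer_corners lam"
  and strict_sorted_corners: "sorted_wrt (<) corners"
  using finite_outer_corners by simp_all

text \<open>\<open>L - 1\<close> plays the role of an outer corner before the first one.\<close>

definition corner :: "nat \<Rightarrow> int" where
  "corner k = (if k = 0 then L - 1 else corners ! (k - 1))"

lemma corner_in_outer_corners: "0 < k \<Longrightarrow> k \<le> length corners \<Longrightarrow> corner k \<in> outer_corners lam"
  using set_corners nth_mem[of "k - 1" corners] by (simp add: corner_def)

lemma slope_corner: "k \<le> length corners \<Longrightarrow> slope (corner k) = -1"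
  using corner_in_outer_corners[of k] slope_before_L[of "L - 1"]
  by (cases "k = 0") (auto simp: corner_def outer_corners_eq)

lemma corner_less_Suc: "k < length corners \<Longrightarrow> corner k < corner (Suc k)"
  using corner_in_outer_corners[of "Suc k"] outer_corners_subset
    sorted_wrt_nth_less[OF strict_sorted_corners, of "k - 1" k]
  by (cases "k = 0") (auto simp: corner_def)

lemma corners_nth_mono: "j \<le> j' \<Longrightarrow> j' < length corners \<Longrightarrow> corners ! j \<le> corners ! j'"
  using sorted_wrt_nth_less[OF strict_sorted_corners, of j j'] by (cases "j = j'") auto

lemma outer_corner_not_between:
  assumes "m \<in> outer_corners lam" "k < length corners"
  shows "m \<le> corner k \<or> corner (Suc k) \<le> m"
proof -
  obtain j where "j < length corners" "m = corners ! j"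
    using assms(1) set_corners by (metis in_set_conv_nth)
  with assms(2) show ?thesis using corners_nth_mono by (cases "j < k") (auto simp: corner_def)
qed

lemma corner_valley:
  assumes "k < length corners"
  obtains i where "valley (corner k) i (corner (Suc k))"
proof (rule valley_between_outer_corners)
  show "corner k < corner (Suc k)" using assms by (rule corner_less_Suc)
  show "slope (corner k) = -1" using assms by (intro slope_corner) simp
  show "corner (Suc k) \<in> outer_corners lam" using assms by (intro corner_in_outer_corners) auto
  fix m assume "corner k < m" "m < corner (Suc k)"
  then show "m \<notin> outer_corners lam" using outer_corner_not_between[OF _ assms, of m] by auto
qed (rule that)

lemma L_le_corner: "k \<le> length corners \<Longrightarrow> L - 1 \<le> corner k"
proof (induction k)
  case (Suc k)
  then show ?case using corner_less_Suc[of k] by simp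
qed (simp add: corner_def)

lemma outer_corner_le_last: "m \<in> outer_corners lam \<Longrightarrow> m \<le> corner (length corners)"
proof -
  assume "m \<in> outer_corners lam"
  then obtain j where "j < length corners" "m = corners ! j"
    using set_corners by (metis in_set_conv_nth)
  then show ?thesis using corners_nth_mono[of j "length corners - 1"] by (simp add: corner_def)
qed

lemma fold_flat_step_corners:
  "k \<le> length corners \<Longrightarrow> fold (flat_step e lam) (take k corners) (omega lam) = flattened (corner k)"
proof (induction k)
  case 0
  then show ?case by (simp add: corner_def flattened_before_L)
next
  case (Suc k)
  obtain i where "valley (corner k) i (corner (Suc k))"
    by (rule corner_valley) (use Suc.prems in \<open>simp add: Suc_le_eq\<close>)
  moreover have "corners ! k = corner (Suc k)" by (simp add: corner_def)
  ultimately show ?case using Suc flat_step_valley by (simp add: take_Suc_conv_app_nth)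
qed

lemma sheared_le_start:
  "k \<le> length corners \<Longrightarrow> real_of_int (L - 1) \<le> t \<Longrightarrow> t \<le> real_of_int (corner k)
    \<Longrightarrow> sheared t \<le> sheared (real_of_int (L - 1))"
proof (induction k arbitrary: t)
  case 0
  then show ?case by (simp add: corner_def)
next
  case (Suc k)
  show ?case
  proof (cases "t \<le> real_of_int (corner k)")
    case False
    obtain i where "valley (corner k) i (corner (Suc k))"
      by (rule corner_valley) (use Suc.prems in \<open>simp add: Suc_le_eq\<close>)
    then have "sheared t \<le> sheared (real_of_int (corner k))"
      using False Suc.prems by (intro valley_sheared_le_start) auto
    also have "\<dots> \<le> sheared (real_of_int (L - 1))"
      using Suc L_le_corner[of k] by simp
    finally show ?thesis .
  qed (use Suc in simp)
qed

text \<open>A climb of fewer than \<open>e\<close> steps raises \<open>sheared\<close> by at most \<open>(1 - \<alpha>)(e - 1) = 1 + \<alpha>\<close>, and the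
  descent of at least one step before it lowers \<open>sheared\<close> by at least as much.\<close>

lemma sheared_rise_le:
  "k \<le> length corners \<Longrightarrow> s \<le> t \<Longrightarrow> t \<le> real_of_int (corner k) \<Longrightarrow> sheared t - sheared s \<le> 1 + \<alpha>"
proof (induction k arbitrary: s t)
  case 0
  then show ?case
    using sheared_antimono_before_L[of s t] alpha_nonneg by (simp add: corner_def)
next
  case (Suc k)
  obtain i where valley: "valley (corner k) i (corner (Suc k))"
    by (rule corner_valley) (use Suc.prems in \<open>simp add: Suc_le_eq\<close>)
  consider "t \<le> real_of_int (corner k)" | "real_of_int (corner k) \<le> s"
    | "s < real_of_int (corner k)" "real_of_int (corner k) < t"
    by linarith
  then show ?case
  proof cases
    case 3
    have "sheared t \<le> sheared (real_of_int (corner k))"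
      using 3 Suc.prems by (intro valley_sheared_le_start[OF valley]) auto
    moreover have "sheared (real_of_int (corner k)) - sheared s \<le> 1 + \<alpha>"
      using 3 Suc by simp
    ultimately show ?thesis by linarith
  qed (use Suc valley_sheared_rise[OF valley] in auto)
qed

abbreviation last_corner :: int where
  "last_corner \<equiv> corner (length corners)"

lemma omega_plus_eq_flattened: "omega_plus e lam = flattened last_corner"
  using fold_flat_step_corners[of "length corners"] by (simp add: omega_plus_def)

lemma last_corner_less_R: "last_corner < R"
  using slope_corner[of "length corners"] slope_after_R[of last_corner] by force

lemma descent_after_last_corner: "\<forall>m. last_corner \<le> m \<and> m < R \<longrightarrow> slope m = -1"
proof (intro allI impI, rule ccontr)
  fix m assume m: "last_corner \<le> m \<and> m < R" and "slope m \<noteq> -1"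
  then have "slope m = 1" using slope_cases by blast
  have "n < R \<longrightarrow> slope n = 1" if "m \<le> n" for n
    using that
  proof (induction n rule: int_ge_induct)
    case (step n)
    show ?case
    proof
      assume "n + 1 < R"
      then have "slope n = 1" using step by simp
      moreover have "n + 1 \<notin> outer_corners lam"
        using outer_corner_le_last[of "n + 1"] step.hyps m by auto
      ultimately show "slope (n + 1) = 1" using slope_cases[of "n + 1"] by (auto simp: outer_corners_eq)
    qed
  qed (use \<open>slope m = 1\<close> in simp)
  then show False using m slope_before_R by force
qed

lemma omega_plus_minus_omega_bounds:
  "0 \<le> omega_plus e lam s - omega lam s \<and> omega_plus e lam s - omega lam s \<le> real e"
proof (cases "s \<le> real_of_int last_corner")
  case True
  then have "omega_plus e lam s - omega lam s = running_max s (real_of_int last_corner) - sheared s"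
    by (simp add: omega_plus_eq_flattened flattened_def envelope_def sheared_def)
  moreover have "sheared s \<le> running_max s (real_of_int last_corner)"
    using True by (intro running_max_ge) auto
  moreover have "running_max s (real_of_int last_corner) \<le> sheared s + (1 + \<alpha>)"
    using True sheared_rise_le[of "length corners" s] by (intro running_max_le) force+
  ultimately show ?thesis using one_plus_alpha_le by linarith
qed (simp add: omega_plus_eq_flattened flattened_right)

lemma omega_plus_outside:
  assumes "s \<le> real_of_int L - 1 \<or> real_of_int R \<le> s"
  shows "omega_plus e lam s = \<bar>s\<bar>"
  using assms
proof
  assume s: "s \<le> real_of_int L - 1"
  then have s_le: "s \<le> real_of_int last_corner" using L_le_corner[of "length corners"] by linarith
  have "running_max s (real_of_int last_corner) = sheared s"
  proof (rule running_max_eqI[of s s])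
    fix t assume t: "s \<le> t" "t \<le> real_of_int last_corner"
    show "sheared t \<le> sheared s"
    proof (cases "t \<le> real_of_int (L - 1)")
      case True
      then show ?thesis using t by (intro sheared_antimono_before_L) auto
    next
      case False
      then have "sheared t \<le> sheared (real_of_int (L - 1))"
        using t by (intro sheared_le_start[of "length corners"]) auto
      also have "\<dots> \<le> sheared s" using s by (intro sheared_antimono_before_L) auto
      finally show ?thesis .
    qed
  qed (use s_le in auto)
  then show ?thesis
    using s_le s left_tail[of s] L_neg
    by (simp add: omega_plus_eq_flattened flattened_def envelope_def sheared_def)
next
  assume "real_of_int R \<le> s"
  then show ?thesis
    using last_corner_less_R right_tail[of s] R_pos
    by (simp add: omega_plus_eq_flattened flattened_right)
qed

lemma abs_le_omega: "\<bar>x\<bar> \<le> omega lam x"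
proof -
  have "x \<le> omega lam x"
    using omega_lipschitz[of x "real_of_int R"] right_tail[of "real_of_int R"] right_tail[of x]
    by (cases "x \<le> real_of_int R") (auto simp: abs_le_iff)
  moreover have "- x \<le> omega lam x"
    using omega_lipschitz[of x "real_of_int L"] left_tail[of "real_of_int L"] left_tail[of x]
    by (cases "real_of_int L \<le> x") (auto simp: abs_le_iff)
  ultimately show ?thesis by simp
qed

lemma continuous_omega_plus: "continuous_on UNIV (omega_plus e lam)"
  unfolding omega_plus_eq_flattened by (rule continuous_flattened)

lemma omega_plus_sheared_antimono:
  "x \<le> y \<Longrightarrow> y \<le> real_of_int R \<Longrightarrow> omega_plus e lam y - \<alpha> * y \<le> omega_plus e lam x - \<alpha> * x"
  using envelope_antimono_on_descent[OF descent_after_last_corner, of x y]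
  by (simp add: omega_plus_eq_flattened flattened_def)

end

lemma regular_profile_of_partition:
  assumes "2 \<le> e" "is_partition lam" "lam \<noteq> []" "e_regular e lam"
  shows "regular_profile e lam (profile_slope lam) (- int (lam ! 0)) (int (length lam))"
proof
  show "\<And>n x. real_of_int n \<le> x \<Longrightarrow> x \<le> real_of_int n + 1 \<Longrightarrow>
      omega lam x = omega lam (real_of_int n) + profile_slope lam n * (x - real_of_int n)"
    using assms(2) by (rule omega_affine_on_unit_interval)
  show "\<And>n. (\<forall>j<e. profile_slope lam (n + int j) = 1) \<Longrightarrow> int (length lam) \<le> n"
    using rising_run_beyond_diagram[OF assms(2,4)] assms(1) by simp
qed (use assms first_part_pos[OF assms(2,3)] omega_left_of_diagram omega_right_of_diagram
       profile_slope_first_part profile_slope_last_row omega_zero_pos in \<open>auto simp: profile_slope_def\<close>)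

section \<open>Shaking\<close>

lemma closed_segment_eq_ray_image:
  fixes p v :: "'a::real_vector"
  assumes "0 \<le> m"
  shows "closed_segment p (p + m *\<^sub>R v) = (\<lambda>t. p + t *\<^sub>R v) ` {0..m}"
proof -
  have "closed_segment (0 *\<^sub>R v) (m *\<^sub>R v) = (\<lambda>t. t *\<^sub>R v) ` closed_segment 0 m"
    by (rule closed_segment_linear_image) simp
  then have "closed_segment p (p + m *\<^sub>R v) = (\<lambda>x. p + x) ` (\<lambda>t. t *\<^sub>R v) ` {0..m}"
    using assms closed_segment_translation[of p 0 "m *\<^sub>R v"] by (simp add: closed_segment_eq_real_ivl)
  then show ?thesis by (simp add: image_image)
qed

locale sheared_antitone =
  fixes e :: nat and g :: "real \<Rightarrow> real" and a b :: real
  assumes e_ge_2: "2 \<le> e"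
    and continuous_g: "continuous_on UNIV g"
    and abs_le_g: "\<And>x. \<bar>x\<bar> \<le> g x"
    and nontrivial: "\<exists>x. g x \<noteq> \<bar>x\<bar>"
    and outside: "\<And>x. x \<notin> {a..b} \<Longrightarrow> g x = \<bar>x\<bar>"
    and antitone: "\<And>x y. a \<le> x \<Longrightarrow> x \<le> y \<Longrightarrow> y \<le> b \<Longrightarrow> g y - alpha e * y \<le> g x - alpha e * x"
begin

abbreviation \<alpha> :: real where "\<alpha> \<equiv> alpha e"

abbreviation support :: "real set" where
  "support \<equiv> {x. g x \<noteq> \<bar>x\<bar>}"

lemmas alpha_nonneg = alpha_bounds(1)[OF e_ge_2] and alpha_less_1 = alpha_bounds(2)[OF e_ge_2]

lemma support_subset: "support \<subseteq> {a..b}"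
  using outside by blast

lemma open_support: "open support"
  by (rule open_Collect_neq) (use continuous_g in \<open>auto intro: continuous_intros\<close>)

lemma bdd_support: "bdd_below support" "bdd_above support"
  using support_subset by (auto intro!: bdd_belowI[of _ a] bdd_aboveI[of _ b])

lemma g_Inf_support: "g (Inf support) = \<bar>Inf support\<bar>"
proof (rule ccontr)
  assume "g (Inf support) \<noteq> \<bar>Inf support\<bar>"
  then obtain r where "r > 0" "ball (Inf support) r \<subseteq> support"
    using open_support open_contains_ball by blast
  moreover have "Inf support - r / 2 \<in> ball (Inf support) r" using \<open>r > 0\<close> by (simp add: dist_real_def)
  ultimately have "Inf support - r / 2 \<in> support" by blast
  then have "Inf support \<le> Inf support - r / 2" by (rule cInf_lower[OF _ bdd_support(1)])
  then show False using \<open>r > 0\<close> by simp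
qed

text \<open>If the support started at some \<open>x\<^sub>0 > 0\<close>, then \<open>g - \<alpha> x\<close> would equal \<open>(1 - \<alpha>) x\<^sub>0\<close> there but
  exceed \<open>(1 - \<alpha>) x > (1 - \<alpha>) x\<^sub>0\<close> at every other point \<open>x\<close> of the support.\<close>

lemma Inf_support_nonpos: "Inf support \<le> 0"
proof (rule ccontr)
  assume pos: "\<not> Inf support \<le> 0"
  obtain x where x: "x \<in> support" using nontrivial by blast
  have "Inf support \<le> x" using x bdd_support(1) by (rule cInf_lower)
  moreover have "x \<noteq> Inf support" using x g_Inf_support by auto
  ultimately have "Inf support < x" by simp
  have "a \<le> Inf support" using x support_subset by (intro cInf_greatest) auto
  moreover have "x \<le> b" using x support_subset by auto
  ultimately have "g x - \<alpha> * x \<le> g (Inf support) - \<alpha> * Inf support"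
    using \<open>Inf support < x\<close> by (intro antitone) auto
  moreover have "x < g x" using x abs_le_g[of x] pos \<open>Inf support < x\<close> by auto
  moreover have "(1 - \<alpha>) * Inf support < (1 - \<alpha>) * x"
    using \<open>Inf support < x\<close> alpha_less_1 by simp
  ultimately show False using g_Inf_support pos by (simp add: algebra_simps)
qed

lemma support_bounds: "a \<le> Inf support" "Sup support \<le> b"
  using nontrivial support_subset by (auto intro!: cInf_greatest cSup_least)

lemma gr_eq: "gr g = {(x, y). Inf support \<le> x \<and> x \<le> Sup support \<and> 0 \<le> y \<and> \<bar>x\<bar> \<le> y \<and> y \<le> g x}"
  by (simp add: gr_def)

lemma closed_gr: "closed (gr g)"
proof -
  have "continuous_on UNIV (\<lambda>z :: real \<times> real. g (fst z))"
    by (rule continuous_on_compose2[OF continuous_g]) (auto intro: continuous_intros)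
  then show ?thesis unfolding gr_eq case_prod_beta
    by (intro closed_Collect_conj closed_Collect_le continuous_intros) auto
qed

definition dir_norm :: real where
  "dir_norm = norm (1 :: real, \<alpha>)"

lemma dir_norm_pos: "0 < dir_norm"
  by (simp add: dir_norm_def zero_prod_def)

lemma ray_point: "(q, - q) + t *\<^sub>R shake_dir e = (q + t / dir_norm, - q + \<alpha> * (t / dir_norm))"
  by (simp add: shake_dir_def dir_norm_def)

definition trace :: "real \<Rightarrow> real set" where
  "trace q = {t. (q, - q) + t *\<^sub>R shake_dir e \<in> gr g}"

lemma mem_trace_iff:
  "t \<in> trace q \<longleftrightarrow> (let w = t / dir_norm in Inf support \<le> q + w \<and> q + w \<le> Sup support
     \<and> 0 \<le> - q + \<alpha> * w \<and> \<bar>q + w\<bar> \<le> - q + \<alpha> * w \<and> - q + \<alpha> * w \<le> g (q + w))"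
  by (simp add: trace_def ray_point gr_eq Let_def)

lemma trace_nonneg:
  assumes "t \<in> trace q" shows "0 \<le> t"
proof -
  define w where "w = t / dir_norm"
  have "- (q + w) \<le> - q + \<alpha> * w"
    using assms by (auto simp: mem_trace_iff Let_def abs_le_iff w_def)
  then have "0 \<le> (1 + \<alpha>) * w" by (simp add: algebra_simps)
  then have "0 \<le> w" using alpha_nonneg by (simp add: zero_le_mult_iff)
  then show ?thesis using dir_norm_pos by (simp add: w_def zero_le_divide_iff)
qed

lemma trace_base:
  assumes "t \<in> trace q" shows "Inf support \<le> q" "q \<le> 0"
proof -
  define w where "w = t / dir_norm"
  have w: "0 \<le> w" using trace_nonneg[OF assms] dir_norm_pos by (simp add: w_def)
  have mem: "Inf support \<le> q + w" "q + w \<le> Sup support" "q + w \<le> - q + \<alpha> * w" "- q + \<alpha> * w \<le> g (q + w)"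
    using assms by (auto simp: mem_trace_iff Let_def abs_le_iff w_def)
  have "\<alpha> * w \<le> w" using alpha_less_1 alpha_nonneg w by (intro mult_left_le_one_le) auto
  then show "q \<le> 0" using mem(3) by simp
  show "Inf support \<le> q"
  proof (rule ccontr)
    assume "\<not> Inf support \<le> q"
    then have "(1 + \<alpha>) * q < (1 + \<alpha>) * Inf support" using alpha_nonneg by simp
    moreover have "g (q + w) - \<alpha> * (q + w) \<le> g (Inf support) - \<alpha> * Inf support"
      using mem(1,2) support_bounds by (intro antitone) auto
    ultimately show False
      using mem(4) g_Inf_support Inf_support_nonpos by (simp add: algebra_simps)
  qed
qed

lemma trace_down:
  assumes "t \<in> trace q" "0 \<le> t'" "t' \<le> t" shows "t' \<in> trace q"
proof -
  define w where "w = t / dir_norm"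
  define w' where "w' = t' / dir_norm"
  have w': "0 \<le> w'" "w' \<le> w" using assms(2,3) dir_norm_pos by (auto simp: divide_right_mono w_def w'_def)
  have mem: "q + w \<le> Sup support" "q + w \<le> - q + \<alpha> * w" "- q + \<alpha> * w \<le> g (q + w)"
    using assms(1) by (auto simp: mem_trace_iff Let_def abs_le_iff w_def)
  have q: "Inf support \<le> q" "q \<le> 0" using trace_base[OF assms(1)] by auto
  have "(1 - \<alpha>) * w' \<le> (1 - \<alpha>) * w" using alpha_less_1 w' by (intro mult_left_mono) auto
  then have "q + w' \<le> - q + \<alpha> * w'" using mem(2) by (simp add: algebra_simps)
  moreover have "0 \<le> \<alpha> * w'" using alpha_nonneg w' by simp
  moreover have "g (q + w) - \<alpha> * (q + w) \<le> g (q + w') - \<alpha> * (q + w')"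
    using q w' mem(1) support_bounds by (intro antitone) auto
  ultimately show ?thesis
    using q w' mem by (auto simp: mem_trace_iff Let_def abs_le_iff w'_def[symmetric] algebra_simps)
qed

lemma closed_trace: "closed (trace q)"
proof -
  have "trace q = (\<lambda>t. (q, - q) + t *\<^sub>R shake_dir e) -` gr g" by (auto simp: trace_def)
  also have "closed \<dots>" by (intro closed_vimage closed_gr continuous_intros)
  finally show ?thesis .
qed

lemma bdd_above_trace: "bdd_above (trace q)"
proof (rule bdd_aboveI)
  fix t assume t: "t \<in> trace q"
  then have "q + t / dir_norm \<le> Sup support" by (simp add: mem_trace_iff Let_def)
  then have "t / dir_norm \<le> Sup support - Inf support" using trace_base(1)[OF t] by simp
  then show "t \<le> dir_norm * (Sup support - Inf support)" using dir_norm_pos by (simp add: field_simps)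
qed

lemma trace_eq_interval:
  assumes "trace q \<noteq> {}" shows "trace q = {0 .. Sup (trace q)}"
proof -
  have max: "Sup (trace q) \<in> trace q"
    using assms bdd_above_trace closed_trace by (rule closed_contains_Sup)
  show ?thesis
  proof (intro set_eqI iffI)
    fix t assume "t \<in> trace q"
    then show "t \<in> {0 .. Sup (trace q)}" using trace_nonneg cSup_upper[OF _ bdd_above_trace] by auto
  next
    fix t assume "t \<in> {0 .. Sup (trace q)}"
    then show "t \<in> trace q" using trace_down[OF max] by auto
  qed
qed

text \<open>Every line of direction \<open>v\<close> through \<open>D\<close> meets \<open>gr g\<close> in a segment starting on \<open>D\<close>, so shaking
  along \<open>v\<close> leaves \<open>gr g\<close> in place.\<close>

lemma shake_slice:
  "(if gr g \<inter> {(q, - q) + t *\<^sub>R shake_dir e | t. True} = {} then {}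
    else closed_segment (q, - q) ((q, - q) + measure lborel {t. (q, - q) + t *\<^sub>R shake_dir e \<in> gr g} *\<^sub>R shake_dir e))
   = (\<lambda>t. (q, - q) + t *\<^sub>R shake_dir e) ` trace q"
proof (cases "trace q = {}")
  case False
  define m where "m = Sup (trace q)"
  have interval: "trace q = {0 .. m}" unfolding m_def using False by (rule trace_eq_interval)
  then have "0 \<le> m" using False by auto
  moreover have "measure lborel {t. (q, - q) + t *\<^sub>R shake_dir e \<in> gr g} = m"
    using interval \<open>0 \<le> m\<close> by (simp add: trace_def[symmetric])
  moreover have "gr g \<inter> {(q, - q) + t *\<^sub>R shake_dir e | t. True} \<noteq> {}"
    using False by (auto simp: trace_def)
  ultimately show ?thesis using interval by (simp add: closed_segment_eq_ray_image)
qed (auto simp: trace_def)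

theorem shake_gr: "shake e (gr g) = gr g"
proof -
  have D: "{p :: real \<times> real. snd p = - fst p} = range (\<lambda>q. (q, - q))"
  proof (intro set_eqI iffI)
    fix p :: "real \<times> real" assume "p \<in> {p. snd p = - fst p}"
    then have "p = (\<lambda>q. (q, - q)) (fst p)" by (cases p) auto
    then show "p \<in> range (\<lambda>q. (q, - q))" by (rule range_eqI)
  qed auto
  have "shake e (gr g) = (\<Union>q. (\<lambda>t. (q, - q) + t *\<^sub>R shake_dir e) ` trace q)"
    by (simp only: shake_def D image_image shake_slice)
  also have "\<dots> = gr g"
  proof (intro set_eqI iffI)
    fix z assume "z \<in> (\<Union>q. (\<lambda>t. (q, - q) + t *\<^sub>R shake_dir e) ` trace q)"
    then show "z \<in> gr g" by (auto simp: trace_def)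
  next
    fix z assume z: "z \<in> gr g"
    obtain x y where xy: "z = (x, y)" by fastforce
    define w where "w = (x + y) / (1 + \<alpha>)"
    have "(1 + \<alpha>) * w = x + y" using alpha_nonneg by (simp add: w_def)
    moreover have "(x - w, - (x - w)) + (dir_norm * w) *\<^sub>R shake_dir e = (x - w + w, - (x - w) + \<alpha> * w)"
      using ray_point[of "x - w" "dir_norm * w"] dir_norm_pos by simp
    ultimately have "(x - w, - (x - w)) + (dir_norm * w) *\<^sub>R shake_dir e = z"
      by (simp add: xy algebra_simps)
    with z show "z \<in> (\<Union>q. (\<lambda>t. (q, - q) + t *\<^sub>R shake_dir e) ` trace q)"
      by (auto simp: trace_def intro!: exI[of _ "x - w"] image_eqI[of _ _ "dir_norm * w"])
  qed
  finally show ?thesis .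
qed

end

context regular_profile
begin

lemma sheared_antitone_omega_plus:
  "sheared_antitone e (omega_plus e lam) (real_of_int L - 1) (real_of_int R)"
proof
  show "\<bar>x\<bar> \<le> omega_plus e lam x" for x
    using abs_le_omega[of x] omega_plus_minus_omega_bounds[of x] by linarith
  show "\<exists>x. omega_plus e lam x \<noteq> \<bar>x\<bar>"
    using omega_zero_pos omega_plus_minus_omega_bounds[of 0] by (intro exI[of _ 0]) auto
qed (use e_ge_2 continuous_omega_plus omega_plus_outside omega_plus_sheared_antimono in auto)

end

theorem proposition5p5:
  fixes e :: nat and lam :: "nat list"
  assumes "2 \<le> e" and "is_partition lam" and "lam \<noteq> []" and "e_regular e lam"
  shows "(\<forall>s. 0 \<le> omega_plus e lam s - omega lam s \<and> omega_plus e lam s - omega lam s \<le> real e)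
       \<and> (\<forall>s. s \<notin> {real_of_int (Min (inner_corners lam)) - 1 <..< real_of_int (Max (inner_corners lam))}
              \<longrightarrow> omega_plus e lam s = \<bar>s\<bar>)
       \<and> shake e (gr (omega_plus e lam)) = gr (omega_plus e lam)"
proof -
  interpret regular_profile e lam "profile_slope lam" "- int (lam ! 0)" "int (length lam)"
    using assms by (rule regular_profile_of_partition)
  interpret shaking:
    sheared_antitone e "omega_plus e lam" "real_of_int (- int (lam ! 0)) - 1" "real (length lam)"
    using sheared_antitone_omega_plus by simp
  show ?thesis
    using omega_plus_minus_omega_bounds omega_plus_outside shaking.shake_gr
    by (auto simp: Min_inner_corners Max_inner_corners)
qed

end
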